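(* Let $h:[0,\infty)\to[\frac{\beta u_0-1}{r},\frac{\beta u_0}{r}]$ be a decreasing solution to the HJB equation with $h'(0)=0$, and let $z_f\in(0,d]$, $z_g\in[d,\infty)$ be such that $h=\bar f$ on $[0,z_f]$ for some function $\bar f(z)=\frac{\beta u_0}{r}+A_2e^{\theta_1(u_0)z}+B_2e^{-\theta_2(u_0)z}$ and $h=\bar g$ on $(z_g,\infty)$ for some function $\bar g(z)=\frac{\beta u_0-1}{r}+a_2e^{\theta_1(u_0)z}+b_2e^{-\theta_2(u_0)z}$ (as provided by the structure result for such solutions). Then $$\bar f(z)=\frac{\beta u_0}{r}+A_2\Big(e^{\theta_1(u_0)z}+\frac{\theta_1(u_0)}{\theta_2(u_0)}e^{-\theta_2(u_0)z}\Big)\ (z\in[0,z_f]),\qquad \bar g(z)=\frac{\beta u_0-1}{r}+b_2e^{-\theta_2(u_0)z}\ (z>z_g).$$ In particular $\lim_{z\to\infty}h(z)=\frac{\beta u_0-1}{r}$.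
   Context: Fix $\mu\in\mathbb R$, $\sigma>0$, $u_0>0$, $r>0$, $\beta>0$, $d>0$. For $u\in[0,u_0]$ let $\theta_1(u)=\frac{\sqrt{(\mu-u)^2+2r\sigma^2}+(\mu-u)}{\sigma^2}$ and $\theta_2(u)=\frac{\sqrt{(\mu-u)^2+2r\sigma^2}-(\mu-u)}{\sigma^2}$. The HJB equation is $$-rh(z)-\mu h'(z)+\tfrac{\sigma^2}{2}h''(z)+\sup_{u\in[0,u_0]}\{(\beta+h'(z))u\}=\mathbf 1_{\{z>d\}}.$$ A solution to the HJB equation is a function $h:[0,\infty)\to[\frac{\beta u_0-1}{r},\frac{\beta u_0}{r}]$ that is continuously differentiable on $[0,\infty)$, twice continuously differentiable on $[0,d]$ and on $(d,\infty)$ respectively (with $h'(0),h''(0)$ the right derivatives and $h''(d)$ the left second derivative), and satisfies the HJB equation for all $z\ge0$. *)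

theory Defs
  imports "HOL-Analysis.Analysis"
begin

definition theta1 :: "real \<Rightarrow> real \<Rightarrow> real \<Rightarrow> real \<Rightarrow> real" where
  "theta1 \<mu> \<sigma> r u = (sqrt ((\<mu> - u)\<^sup>2 + 2 * r * \<sigma>\<^sup>2) + (\<mu> - u)) / \<sigma>\<^sup>2"

definition theta2 :: "real \<Rightarrow> real \<Rightarrow> real \<Rightarrow> real \<Rightarrow> real" where
  "theta2 \<mu> \<sigma> r u = (sqrt ((\<mu> - u)\<^sup>2 + 2 * r * \<sigma>\<^sup>2) - (\<mu> - u)) / \<sigma>\<^sup>2"

text \<open>h is a solution of the HJB equation, with h1 = h' (right derivative at 0)
  and h2 = h'' (right derivative at 0, left second derivative at d).\<close>
definition HJB_solution ::
  "real \<Rightarrow> real \<Rightarrow> real \<Rightarrow> real \<Rightarrow> real \<Rightarrow> real \<Rightarrow>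
   (real \<Rightarrow> real) \<Rightarrow> (real \<Rightarrow> real) \<Rightarrow> (real \<Rightarrow> real) \<Rightarrow> bool" where
  "HJB_solution \<mu> \<sigma> u0 r \<beta> d h h1 h2 \<longleftrightarrow>
     (\<forall>z\<ge>0. (\<beta> * u0 - 1) / r \<le> h z \<and> h z \<le> \<beta> * u0 / r) \<and>
     (\<forall>z\<ge>0. (h has_real_derivative h1 z) (at z within {0..})) \<and>
     continuous_on {0..} h1 \<and>
     (\<forall>z\<in>{0..d}. (h1 has_real_derivative h2 z) (at z within {0..d})) \<and>
     continuous_on {0..d} h2 \<and>
     (\<forall>z>d. (h1 has_real_derivative h2 z) (at z)) \<and>
     continuous_on {d<..} h2 \<and>
     (\<forall>z\<ge>0. - r * h z - \<mu> * h1 z + \<sigma>\<^sup>2 / 2 * h2 z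
               + (SUP u\<in>{0..u0}. (\<beta> + h1 z) * u)
             = (if z > d then 1 else 0))"

end

theory Submission
  imports Defs "HOL-Real_Asymp.Real_Asymp"
begin

text \<open>Only two features of the solution matter. Near 0, the condition h'(0) = 0 on the exponential form forces
  A2 theta1 = B2 theta2. Near infinity, h stays in an interval of length 1/r, which is impossible
  for a2 exp (theta1 z) + b2 exp (- theta2 z) unless a2 = 0, since both thetas are positive; the
  limit of h is then read off the remaining decaying exponential.\<close>

lemma abs_less_sqrt_square_plus:
  fixes x c :: real
  assumes "c > 0"
  shows "\<bar>x\<bar> < sqrt (x\<^sup>2 + c)"
proof -
  have "sqrt (x\<^sup>2) < sqrt (x\<^sup>2 + c)"
    using assms by (intro real_sqrt_less_mono) simp
  then show ?thesis by simp
qed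

lemma theta1_pos:
  assumes "\<sigma> > 0" "r > 0"
  shows "theta1 \<mu> \<sigma> r u > 0"
  using abs_less_sqrt_square_plus[of "2 * r * \<sigma>\<^sup>2" "\<mu> - u"] assms
  unfolding theta1_def by (simp add: abs_less_iff)

lemma theta2_pos:
  assumes "\<sigma> > 0" "r > 0"
  shows "theta2 \<mu> \<sigma> r u > 0"
  using abs_less_sqrt_square_plus[of "2 * r * \<sigma>\<^sup>2" "\<mu> - u"] assms
  unfolding theta2_def by (simp add: abs_less_iff)

lemma exp_combination_right_deriv_0:
  fixes h :: "real \<Rightarrow> real"
  assumes "z0 > 0"
    and h_eq: "\<forall>z\<in>{0..z0}. h z = c + A * exp (s * z) + B * exp (- t * z)"
    and h_deriv: "(h has_real_derivative h') (at 0 within {0..})"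
  shows "h' = A * s - B * t"
proof -
  have "(h has_real_derivative h') (at 0 within {0..z0})"
    using h_deriv by (rule has_field_derivative_subset) auto
  then have "((\<lambda>z. c + A * exp (s * z) + B * exp (- t * z)) has_real_derivative h')
      (at 0 within {0..z0})"
    by (rule has_field_derivative_transform_within[OF _ zero_less_one]) (use assms in auto)
  moreover have "((\<lambda>z. c + A * exp (s * z) + B * exp (- t * z)) has_real_derivative A * s - B * t)
      (at 0 within {0..z0})"
    by (auto intro!: derivative_eq_intros)
  moreover have "at (0::real) within {0..z0} \<noteq> bot"
    using at_within_Icc_at_right[OF \<open>z0 > 0\<close>] by simp
  ultimately show ?thesis
    by (rule has_field_derivative_unique)
qed

lemma exp_combination_bounded_imp_growth_coeff_0:
  fixes a b c s t L U :: real
  assumes "s > 0" "t \<ge> 0"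
    and bounded: "eventually (\<lambda>z. L \<le> c + a * exp (s * z) + b * exp (- t * z)
                                \<and> c + a * exp (s * z) + b * exp (- t * z) \<le> U) at_top"
  shows "a = 0"
proof -
  define M where "M = \<bar>L\<bar> + \<bar>U\<bar> + \<bar>c\<bar>"
  \<comment> \<open>after dividing by exp (s z) the bound tends to 0 while the combination tends to a\<close>
  have "eventually (\<lambda>z. norm (a + b * exp (- (s + t) * z)) \<le> M * exp (- s * z)) at_top"
    using bounded
  proof eventually_elim
    case (elim z)
    have "a * exp (s * z) + b * exp (- t * z) = exp (s * z) * (a + b * exp (- (s + t) * z))"
      by (simp add: algebra_simps flip: exp_add)
    moreover have "\<bar>a * exp (s * z) + b * exp (- t * z)\<bar> \<le> M"
      using elim unfolding M_def by arith
    ultimately have "exp (s * z) * \<bar>a + b * exp (- (s + t) * z)\<bar> \<le> M"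
      by (simp add: abs_mult)
    then show ?case
      by (simp add: exp_minus field_simps)
  qed
  moreover have "((\<lambda>z. M * exp (- s * z)) \<longlongrightarrow> 0) at_top"
    using \<open>s > 0\<close> by real_asymp
  ultimately have "((\<lambda>z. a + b * exp (- (s + t) * z)) \<longlongrightarrow> 0) at_top"
    by (rule Lim_null_comparison)
  moreover have "((\<lambda>z. a + b * exp (- (s + t) * z)) \<longlongrightarrow> a) at_top"
    using assms(1,2) by real_asymp
  ultimately show ?thesis
    using tendsto_unique by force
qed

theorem lemma2p4:
  fixes \<mu> \<sigma> u0 r \<beta> d zf zg A2 B2 a2 b2 :: real
    and h h1 h2 :: "real \<Rightarrow> real"
  assumes "\<sigma> > 0" "u0 > 0" "r > 0" "\<beta> > 0" "d > 0"
    and sol: "HJB_solution \<mu> \<sigma> u0 r \<beta> d h h1 h2"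
    and decr: "\<forall>x y. 0 \<le> x \<longrightarrow> x \<le> y \<longrightarrow> h y \<le> h x"
    and h1_0: "h1 0 = 0"
    and zf: "0 < zf" "zf \<le> d"
    and zg: "d \<le> zg"
    and hf: "\<forall>z\<in>{0..zf}. h z = \<beta> * u0 / r
              + A2 * exp (theta1 \<mu> \<sigma> r u0 * z) + B2 * exp (- theta2 \<mu> \<sigma> r u0 * z)"
    and hg: "\<forall>z>zg. h z = (\<beta> * u0 - 1) / r
              + a2 * exp (theta1 \<mu> \<sigma> r u0 * z) + b2 * exp (- theta2 \<mu> \<sigma> r u0 * z)"
  shows "(\<forall>z\<in>{0..zf}. \<beta> * u0 / r
              + A2 * exp (theta1 \<mu> \<sigma> r u0 * z) + B2 * exp (- theta2 \<mu> \<sigma> r u0 * z)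
            = \<beta> * u0 / r + A2 * (exp (theta1 \<mu> \<sigma> r u0 * z)
                 + theta1 \<mu> \<sigma> r u0 / theta2 \<mu> \<sigma> r u0 * exp (- theta2 \<mu> \<sigma> r u0 * z)))
       \<and> (\<forall>z>zg. (\<beta> * u0 - 1) / r
              + a2 * exp (theta1 \<mu> \<sigma> r u0 * z) + b2 * exp (- theta2 \<mu> \<sigma> r u0 * z)
            = (\<beta> * u0 - 1) / r + b2 * exp (- theta2 \<mu> \<sigma> r u0 * z))
       \<and> (h \<longlongrightarrow> (\<beta> * u0 - 1) / r) at_top"
proof -
  define t1 t2 where "t1 = theta1 \<mu> \<sigma> r u0" and "t2 = theta2 \<mu> \<sigma> r u0"
  have t_pos: "t1 > 0" "t2 > 0"
    unfolding t1_def t2_def using assms(1,3) by (simp_all add: theta1_pos theta2_pos)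
  from sol have bounds: "\<forall>z\<ge>0. (\<beta> * u0 - 1) / r \<le> h z \<and> h z \<le> \<beta> * u0 / r"
    and deriv_0: "(h has_real_derivative h1 0) (at 0 within {0..})"
    unfolding HJB_solution_def by auto
  have "A2 * t1 = B2 * t2"
    using exp_combination_right_deriv_0[OF zf(1) hf[folded t1_def t2_def] deriv_0] h1_0 by simp
  then have B2: "B2 = A2 * (t1 / t2)"
    using t_pos by (simp add: field_simps)
  have h_tail: "eventually (\<lambda>z. h z = (\<beta> * u0 - 1) / r + a2 * exp (t1 * z) + b2 * exp (- t2 * z))
      at_top"
    using eventually_gt_at_top[of zg] by eventually_elim (simp add: hg t1_def t2_def)
  have "eventually (\<lambda>z. (\<beta> * u0 - 1) / r \<le> h z \<and> h z \<le> \<beta> * u0 / r) at_top"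
    using eventually_ge_at_top[of 0] by eventually_elim (simp add: bounds)
  with h_tail have "eventually (\<lambda>z.
        (\<beta> * u0 - 1) / r \<le> (\<beta> * u0 - 1) / r + a2 * exp (t1 * z) + b2 * exp (- t2 * z)
      \<and> (\<beta> * u0 - 1) / r + a2 * exp (t1 * z) + b2 * exp (- t2 * z) \<le> \<beta> * u0 / r) at_top"
    by eventually_elim simp
  then have a2: "a2 = 0"
    by (rule exp_combination_bounded_imp_growth_coeff_0[OF t_pos(1) less_imp_le[OF t_pos(2)]])
  have "((\<lambda>z. (\<beta> * u0 - 1) / r + b2 * exp (- t2 * z)) \<longlongrightarrow> (\<beta> * u0 - 1) / r) at_top"
    using t_pos by real_asymp
  moreover have "eventually (\<lambda>z. (\<beta> * u0 - 1) / r + b2 * exp (- t2 * z) = h z) at_top"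
    using h_tail by eventually_elim (simp add: a2)
  ultimately have "(h \<longlongrightarrow> (\<beta> * u0 - 1) / r) at_top"
    by (rule Lim_transform_eventually)
  then show ?thesis
    using a2 by (simp add: B2 algebra_simps flip: t1_def t2_def)
qed

end
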